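(* Let $G$ be a group and $S\subset G$ a symmetric generating set containing the identity. (1) If $S$ is a determining set, then for any closed $S$-curve $\gamma_0$ based at $e$ there is a sequence $\gamma_1,\dots,\gamma_n$ of closed $S$-curves based at $e$ with $d_U^S(\gamma_{j-1},\gamma_j)\leq1$ for each $j\in\{1,\dots,n\}$ and $\gamma_n=(e)$. (2) If $N\in\mathbb{N}$ is such that for each closed $S$-curve $\gamma_0$ based at $e$ there is a sequence of closed $S$-curves $\gamma_1,\dots,\gamma_n$ based at $e$ with $d_U^S(\gamma_{j-1},\gamma_j)\leq N$ for each $j$ and $\gamma_n=(e)$, then $S^{N+1}$ is a determining set.
   Context: $S^k:=\{s_1\cdots s_k: s_j\in S\}$. A generating subset $S$ containing the identity is a determining set if $G$ has a presentation $\langle S\mid\mathcal{R}\rangle$ where every relator is a word of length $3$ in the letters $S\cup S^{-1}$. An $S$-curve is a finite sequence $(g_0,\dots,g_n)$ in $G$ with $g_{j-1}^{-1}g_j\in S$ for all $j$; it is closed based at $g_0$ if $g_0=g_n$. For $S$-curves $g=(g_0,\dots,g_n)$, $h=(h_0,\dots,h_m)$, $d_U^S(g,h)$ is the infimum of $r\in\mathbb{N}$ for which there is a relation $R\subset\{0,\dots,n\}\times\{0,\dots,m\}$ such that every $i\in\{0,\dots,n\}$ and every $j\in\{0,\dots,m\}$ appear in some pair of $R$; if $(i_1,j_1),(i_2,j_2)\in R$ and $i_1<i_2$ then $j_1\leq j_2$; and $g_i^{-1}h_j\in S^r$ for all $(i,j)\in R$. *)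

theory Defs
  imports "HOL-Algebra.Algebra" "HOL-Library.Extended_Nat"
begin

fun set_pow :: "('a, 'b) monoid_scheme \<Rightarrow> 'a set \<Rightarrow> nat \<Rightarrow> 'a set" where
  "set_pow G S 0 = {\<one>\<^bsub>G\<^esub>}"
| "set_pow G S (Suc k) = {x \<otimes>\<^bsub>G\<^esub> s | x s. x \<in> set_pow G S k \<and> s \<in> S}"

(* Formal words in the letters S \<union> S^{-1}: a letter (s, False) stands for s,
   (s, True) for the formal inverse s^{-1}. *)
type_synonym 'a word = "('a \<times> bool) list"

definition letter_val :: "('a, 'b) monoid_scheme \<Rightarrow> 'a \<times> bool \<Rightarrow> 'a" where
  "letter_val G l = (if snd l then inv\<^bsub>G\<^esub> (fst l) else fst l)"

definition word_eval :: "('a, 'b) monoid_scheme \<Rightarrow> 'a word \<Rightarrow> 'a" where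
  "word_eval G w = foldr (\<lambda>l x. letter_val G l \<otimes>\<^bsub>G\<^esub> x) w \<one>\<^bsub>G\<^esub>"

definition is_word :: "'a set \<Rightarrow> 'a word \<Rightarrow> bool" where
  "is_word S w \<longleftrightarrow> fst ` set w \<subseteq> S"

(* One elementary step of the congruence of the free group on S modulo the
   normal closure of R: delete a cancelling pair or a relator (from anywhere). *)
definition pres_step :: "'a set \<Rightarrow> 'a word set \<Rightarrow> ('a word \<times> 'a word) set" where
  "pres_step S R =
     {(u @ [(s, b), (s, \<not> b)] @ v, u @ v) | u v s b. is_word S u \<and> is_word S v \<and> s \<in> S}
   \<union> {(u @ r @ v, u @ v) | u v r. is_word S u \<and> is_word S v \<and> r \<in> R}"

definition pres_trivial :: "'a set \<Rightarrow> 'a word set \<Rightarrow> 'a word \<Rightarrow> bool" where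
  "pres_trivial S R w \<longleftrightarrow> (w, []) \<in> (pres_step S R \<union> (pres_step S R)\<inverse>)\<^sup>*"

definition has_presentation :: "('a, 'b) monoid_scheme \<Rightarrow> 'a set \<Rightarrow> 'a word set \<Rightarrow> bool" where
  "has_presentation G S R \<longleftrightarrow>
     S \<subseteq> carrier G \<and> generate G S = carrier G \<and>
     (\<forall>r\<in>R. is_word S r \<and> word_eval G r = \<one>\<^bsub>G\<^esub>) \<and>
     (\<forall>w. is_word S w \<and> word_eval G w = \<one>\<^bsub>G\<^esub> \<longrightarrow> pres_trivial S R w)"

definition determining_set :: "('a, 'b) monoid_scheme \<Rightarrow> 'a set \<Rightarrow> bool" where
  "determining_set G S \<longleftrightarrow>
     S \<subseteq> carrier G \<and> \<one>\<^bsub>G\<^esub> \<in> S \<and> generate G S = carrier G \<and>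
     (\<exists>R. (\<forall>r\<in>R. length r = 3) \<and> has_presentation G S R)"

definition S_curve :: "('a, 'b) monoid_scheme \<Rightarrow> 'a set \<Rightarrow> 'a list \<Rightarrow> bool" where
  "S_curve G S g \<longleftrightarrow> g \<noteq> [] \<and> set g \<subseteq> carrier G \<and>
     (\<forall>j. 0 < j \<and> j < length g \<longrightarrow> inv\<^bsub>G\<^esub> (g ! (j - 1)) \<otimes>\<^bsub>G\<^esub> (g ! j) \<in> S)"

definition closed_S_curve_at :: "('a, 'b) monoid_scheme \<Rightarrow> 'a set \<Rightarrow> 'a \<Rightarrow> 'a list \<Rightarrow> bool" where
  "closed_S_curve_at G S x g \<longleftrightarrow> S_curve G S g \<and> hd g = x \<and> last g = x"

definition dU_witness :: "('a, 'b) monoid_scheme \<Rightarrow> 'a set \<Rightarrow> 'a list \<Rightarrow> 'a list \<Rightarrow> nat \<Rightarrow> bool" where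
  "dU_witness G S g h r \<longleftrightarrow> (\<exists>Rel. Rel \<subseteq> {0..<length g} \<times> {0..<length h} \<and>
     (\<forall>i<length g. \<exists>j. (i, j) \<in> Rel) \<and> (\<forall>j<length h. \<exists>i. (i, j) \<in> Rel) \<and>
     (\<forall>i1 j1 i2 j2. (i1, j1) \<in> Rel \<and> (i2, j2) \<in> Rel \<and> i1 < i2 \<longrightarrow> j1 \<le> j2) \<and>
     (\<forall>(i, j)\<in>Rel. inv\<^bsub>G\<^esub> (g ! i) \<otimes>\<^bsub>G\<^esub> (h ! j) \<in> set_pow G S r))"

(* d_U^S as an infimum in enat (infinite if no witness exists) *)
definition dU :: "('a, 'b) monoid_scheme \<Rightarrow> 'a set \<Rightarrow> 'a list \<Rightarrow> 'a list \<Rightarrow> enat" where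
  "dU G S g h = (INF r \<in> {r. dU_witness G S g h r}. enat r)"

end

theory Submission
  imports Defs
begin

text \<open>
  A closed S-curve based at the identity is the same thing as a word over S that evaluates to the
  identity: the curve lists the values of the prefixes, the word lists the increments.

  (1) In a presentation whose relators have length three, such a word is reduced to the empty word
  by deleting cancelling pairs and relators. Every deleted subword evaluates to the identity and
  all its prefixes evaluate into S, so on the level of curves a deletion only cuts off a detour that
  stays within one S-step of the point where it leaves; matching the detour with that point gives
  d_U at most 1.

  (2) Put T = S^(N+1) and take as relators all triangles x y z^(-1) with x, y, z in T. Modulo
  these, every word over T equals a word of positive letters from S, i.e. the word of a closed
  S-curve. If two closed curves g and h are at d_U-distance at most N, a monotone correspondence
  between them gives a ladder whose rungs g_i^(-1) h_j lie in S^N. Two consecutive rungs and the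
  steps of g and h between them form a square with sides in S and diagonal in S^(N+1) = T, i.e. two
  triangles, so the words of g and h are equal modulo the triangle relators. Contracting a curve
  to the constant curve in such steps shows that every relation follows from the triangles.
\<close>

section \<open>Words and the congruence of a presentation\<close>

lemma is_word_simps [simp]:
  "is_word S []"
  "is_word S (l # w) \<longleftrightarrow> fst l \<in> S \<and> is_word S w"
  "is_word S (x @ y) \<longleftrightarrow> is_word S x \<and> is_word S y"
  by (auto simp: is_word_def)

lemma is_word_take: "is_word S w \<Longrightarrow> is_word S (take k w)"
  unfolding is_word_def by (meson image_mono order_trans set_take_subset)

lemma is_word_mono: "is_word S w \<Longrightarrow> S \<subseteq> T \<Longrightarrow> is_word T w"
  unfolding is_word_def by auto

lemma word_eval_Nil [simp]: "word_eval G [] = \<one>\<^bsub>G\<^esub>"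
  by (simp add: word_eval_def)

lemma word_eval_Cons [simp]: "word_eval G (l # w) = letter_val G l \<otimes>\<^bsub>G\<^esub> word_eval G w"
  by (simp add: word_eval_def)

definition pres_equiv :: "'a set \<Rightarrow> 'a word set \<Rightarrow> ('a word \<times> 'a word) set" where
  "pres_equiv S R = (pres_step S R \<union> (pres_step S R)\<inverse>)\<^sup>*"

lemma pres_trivial_iff: "pres_trivial S R w \<longleftrightarrow> (w, []) \<in> pres_equiv S R"
  by (simp add: pres_trivial_def pres_equiv_def)

lemma pres_step_context:
  assumes "(x, y) \<in> pres_step S R" "is_word S a" "is_word S b"
  shows "(a @ x @ b, a @ y @ b) \<in> pres_step S R"
proof -
  from assms(1) consider
    (cancel) u v s c where "x = u @ [(s, c), (s, \<not> c)] @ v" "y = u @ v" "is_word S u" "is_word S v"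
      "s \<in> S"
  | (relator) u v r where "x = u @ r @ v" "y = u @ v" "is_word S u" "is_word S v" "r \<in> R"
    unfolding pres_step_def by blast
  then show ?thesis
  proof cases
    case cancel
    then show ?thesis
      using assms(2,3) unfolding pres_step_def
      by (intro UnI1 CollectI) (rule exI[of _ "a @ u"], rule exI[of _ "v @ b"], auto)
  next
    case relator
    then show ?thesis
      using assms(2,3) unfolding pres_step_def
      by (intro UnI2 CollectI) (rule exI[of _ "a @ u"], rule exI[of _ "v @ b"], auto)
  qed
qed

lemma pres_equiv_refl: "(x, x) \<in> pres_equiv S R"
  by (simp add: pres_equiv_def)

lemma pres_equiv_sym: "(x, y) \<in> pres_equiv S R \<Longrightarrow> (y, x) \<in> pres_equiv S R"
  unfolding pres_equiv_def by (metis converse_Un converse_converse rtrancl_converseI sup_commute)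

lemma pres_equiv_trans:
  "(x, y) \<in> pres_equiv S R \<Longrightarrow> (y, z) \<in> pres_equiv S R \<Longrightarrow> (x, z) \<in> pres_equiv S R"
  unfolding pres_equiv_def by (rule rtrancl_trans)

lemma pres_equiv_context:
  assumes "(x, y) \<in> pres_equiv S R" "is_word S a" "is_word S b"
  shows "(a @ x @ b, a @ y @ b) \<in> pres_equiv S R"
  using assms(1) unfolding pres_equiv_def
proof (induction rule: rtrancl_induct)
  case (step y z)
  then have "(a @ y @ b, a @ z @ b) \<in> pres_step S R \<union> (pres_step S R)\<inverse>"
    using pres_step_context[OF _ assms(2,3)] by blast
  with step.IH show ?case
    by (rule rtrancl_into_rtrancl)
qed simp

lemma pres_equiv_append:
  assumes "(x, y) \<in> pres_equiv S R" "(x', y') \<in> pres_equiv S R" "is_word S x'" "is_word S y"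
  shows "(x @ x', y @ y') \<in> pres_equiv S R"
  using pres_equiv_context[OF assms(1) _ assms(3), of "[]"] pres_equiv_context[OF assms(2) assms(4), of "[]"]
  by (auto intro: pres_equiv_trans)

lemma pres_equiv_cancel:
  "is_word S u \<Longrightarrow> is_word S v \<Longrightarrow> s \<in> S \<Longrightarrow> (u @ [(s, b), (s, \<not> b)] @ v, u @ v) \<in> pres_equiv S R"
  unfolding pres_equiv_def pres_step_def by (intro r_into_rtrancl UnI1) blast

lemma pres_equiv_relator:
  "is_word S u \<Longrightarrow> is_word S v \<Longrightarrow> r \<in> R \<Longrightarrow> (u @ r @ v, u @ v) \<in> pres_equiv S R"
  unfolding pres_equiv_def pres_step_def by (intro r_into_rtrancl UnI1 UnI2) blast

lemma set_pow_SucI: "x \<in> set_pow G S k \<Longrightarrow> s \<in> S \<Longrightarrow> x \<otimes>\<^bsub>G\<^esub> s \<in> set_pow G S (Suc k)"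
  by auto

lemmas set_pow_SucE = set_pow.simps(2)[THEN equalityD1, THEN subsetD, THEN CollectE]

declare set_pow.simps(2) [simp del]

section \<open>Curves and words\<close>

definition curve_of_word :: "('a, 'b) monoid_scheme \<Rightarrow> 'a word \<Rightarrow> 'a list" where
  "curve_of_word G u = map (\<lambda>k. word_eval G (take k u)) [0..<Suc (length u)]"

definition word_of_curve :: "('a, 'b) monoid_scheme \<Rightarrow> 'a list \<Rightarrow> 'a word" where
  "word_of_curve G g = map (\<lambda>k. (inv\<^bsub>G\<^esub> (g ! k) \<otimes>\<^bsub>G\<^esub> g ! Suc k, False)) [0..<length g - 1]"

lemma length_curve_of_word [simp]: "length (curve_of_word G u) = Suc (length u)"
  by (simp add: curve_of_word_def)

lemma curve_of_word_neq_Nil [simp]: "curve_of_word G u \<noteq> []"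
  by (simp add: curve_of_word_def)

lemma curve_of_word_Nil [simp]: "curve_of_word G [] = [\<one>\<^bsub>G\<^esub>]"
  by (simp add: curve_of_word_def)

lemma nth_curve_of_word: "k \<le> length u \<Longrightarrow> curve_of_word G u ! k = word_eval G (take k u)"
  unfolding curve_of_word_def by (simp del: upt_Suc add: nth_map_upt less_Suc_eq_le)

lemma hd_curve_of_word [simp]: "hd (curve_of_word G u) = \<one>\<^bsub>G\<^esub>"
  by (simp add: curve_of_word_def hd_map del: upt_Suc)

lemma last_curve_of_word [simp]: "last (curve_of_word G u) = word_eval G u"
  by (simp add: last_conv_nth nth_curve_of_word)

lemma length_word_of_curve [simp]: "length (word_of_curve G g) = length g - 1"
  by (simp add: word_of_curve_def)

lemma nth_word_of_curve:
  "k < length g - 1 \<Longrightarrow> word_of_curve G g ! k = (inv\<^bsub>G\<^esub> (g ! k) \<otimes>\<^bsub>G\<^esub> g ! Suc k, False)"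
  by (simp add: word_of_curve_def)

lemma take_Suc_word_of_curve:
  "Suc k < length g \<Longrightarrow>
    take (Suc k) (word_of_curve G g) = take k (word_of_curve G g) @ [(inv\<^bsub>G\<^esub> (g ! k) \<otimes>\<^bsub>G\<^esub> g ! Suc k, False)]"
  by (simp add: take_Suc_conv_app_nth nth_word_of_curve)

context group
begin

lemma letter_val_closed: "fst l \<in> carrier G \<Longrightarrow> letter_val G l \<in> carrier G"
  unfolding letter_val_def by auto

lemma word_eval_closed: "is_word (carrier G) w \<Longrightarrow> word_eval G w \<in> carrier G"
  by (induction w) (auto simp: letter_val_closed)

lemma word_eval_append:
  "is_word (carrier G) x \<Longrightarrow> is_word (carrier G) y \<Longrightarrow>
    word_eval G (x @ y) = word_eval G x \<otimes> word_eval G y"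
  by (induction x) (auto simp: m_assoc word_eval_closed letter_val_closed)

lemma word_eval_take_Suc:
  assumes "is_word (carrier G) u" "k < length u"
  shows "word_eval G (take (Suc k) u) = word_eval G (take k u) \<otimes> letter_val G (u ! k)"
proof -
  have "fst (u ! k) \<in> carrier G"
    using assms unfolding is_word_def by auto
  then show ?thesis
    using assms by (simp add: take_Suc_conv_app_nth word_eval_append is_word_take letter_val_closed)
qed

lemma inv_mult_telescope:
  "a \<in> carrier G \<Longrightarrow> b \<in> carrier G \<Longrightarrow> c \<in> carrier G \<Longrightarrow> (inv a \<otimes> b) \<otimes> (inv b \<otimes> c) = inv a \<otimes> c"
  by (simp add: m_assoc[symmetric]) (simp add: m_assoc)

lemma S_curve_mono: "S_curve G S g \<Longrightarrow> S \<subseteq> T \<Longrightarrow> S_curve G T g"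
  unfolding S_curve_def by blast

lemma S_curve_carrier:
  assumes "S_curve G S g"
  shows "S_curve G (carrier G) g"
proof -
  have "g ! k \<in> carrier G" if "k < length g" for k
    using assms that nth_mem unfolding S_curve_def by blast
  then show ?thesis
    using assms unfolding S_curve_def by (auto simp: less_imp_diff_less)
qed

lemma word_of_curve_is_word:
  assumes "S_curve G S g"
  shows "is_word S (word_of_curve G g)"
proof -
  have "inv (g ! k) \<otimes> g ! Suc k \<in> S" if "k < length g - 1" for k
    using assms that unfolding S_curve_def by (auto dest: spec[of _ "Suc k"])
  then show ?thesis
    unfolding is_word_def word_of_curve_def by auto
qed

lemma curve_of_word_of_curve:
  assumes "S_curve G S g" "hd g = \<one>"
  shows "curve_of_word G (word_of_curve G g) = g"
proof (rule nth_equalityI)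
  have ne: "g \<noteq> []" and gc: "set g \<subseteq> carrier G"
    using assms(1) unfolding S_curve_def by auto
  show "length (curve_of_word G (word_of_curve G g)) = length g"
    using ne by simp
  have wc: "is_word (carrier G) (word_of_curve G g)"
    using word_of_curve_is_word[OF S_curve_carrier[OF assms(1)]] .
  fix k assume "k < length (curve_of_word G (word_of_curve G g))"
  then have "k < length g"
    using ne by simp
  then show "curve_of_word G (word_of_curve G g) ! k = g ! k"
  proof (induction k)
    case 0
    then show ?case
      using ne assms(2) by (simp add: nth_curve_of_word hd_conv_nth)
  next
    case (Suc k)
    then have "word_eval G (take (Suc k) (word_of_curve G g)) = g ! k \<otimes> (inv (g ! k) \<otimes> g ! Suc k)"
      by (simp add: word_eval_take_Suc[OF wc] nth_word_of_curve letter_val_def nth_curve_of_word)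
    also have "\<dots> = g ! Suc k"
      using Suc.prems gc by (simp add: m_assoc[symmetric] subsetD)
    finally show ?case
      using Suc.prems by (simp add: nth_curve_of_word)
  qed
qed

lemma word_eval_word_of_curve:
  "S_curve G S g \<Longrightarrow> hd g = \<one> \<Longrightarrow> word_eval G (word_of_curve G g) = last g"
  by (metis curve_of_word_of_curve last_curve_of_word)

lemma word_of_curve_of_word:
  assumes "is_word (carrier G) u" "\<forall>l\<in>set u. \<not> snd l"
  shows "word_of_curve G (curve_of_word G u) = u"
proof (rule nth_equalityI)
  show "length (word_of_curve G (curve_of_word G u)) = length u"
    by simp
  fix k assume "k < length (word_of_curve G (curve_of_word G u))"
  then have k: "k < length u"
    by simp
  have "fst (u ! k) \<in> carrier G" "\<not> snd (u ! k)"
    using assms k unfolding is_word_def by auto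
  then show "word_of_curve G (curve_of_word G u) ! k = u ! k"
    using k by (simp add: nth_word_of_curve nth_curve_of_word word_eval_take_Suc[OF assms(1)]
        m_assoc[symmetric] word_eval_closed is_word_take[OF assms(1)] letter_val_def prod_eq_iff)
qed

lemma set_pow_closed: "S \<subseteq> carrier G \<Longrightarrow> set_pow G S k \<subseteq> carrier G"
  by (induction k) (auto elim!: set_pow_SucE)

lemma set_pow_one: "S \<subseteq> carrier G \<Longrightarrow> set_pow G S 1 = S"
  by (auto simp: set_pow.simps(2) subsetD) (metis l_one subsetD)

end

section \<open>Monotone correspondences\<close>

definition correspondence :: "nat \<Rightarrow> nat \<Rightarrow> (nat \<times> nat) set \<Rightarrow> bool" where
  "correspondence n m Rel \<longleftrightarrow> Rel \<subseteq> {0..<n} \<times> {0..<m} \<and>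
     (\<forall>i<n. \<exists>j. (i, j) \<in> Rel) \<and> (\<forall>j<m. \<exists>i. (i, j) \<in> Rel) \<and>
     (\<forall>i1 j1 i2 j2. (i1, j1) \<in> Rel \<and> (i2, j2) \<in> Rel \<and> i1 < i2 \<longrightarrow> j1 \<le> j2)"

lemma dU_witness_iff_correspondence:
  "dU_witness G S g h r \<longleftrightarrow> (\<exists>Rel. correspondence (length g) (length h) Rel \<and>
     (\<forall>(i, j)\<in>Rel. inv\<^bsub>G\<^esub> (g ! i) \<otimes>\<^bsub>G\<^esub> h ! j \<in> set_pow G S r))"
  by (simp add: dU_witness_def correspondence_def conj_assoc)

lemma correspondence_converse: "correspondence n m Rel \<Longrightarrow> correspondence m n (Rel\<inverse>)"
  unfolding correspondence_def by (auto simp: not_less[symmetric])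

lemma correspondence_graph:
  assumes "mono_on {..<n} \<phi>" "\<phi> ` {..<n} = {..<m}"
  shows "correspondence n m {(i, \<phi> i) | i. i < n}"
  using assms unfolding correspondence_def mono_on_def by (auto simp: image_iff)

lemma correspondence_last:
  assumes corr: "correspondence n m Rel" and "0 < n" "0 < m"
  shows "(n - 1, m - 1) \<in> Rel"
proof -
  from corr have "\<exists>j. (n - 1, j) \<in> Rel" "\<exists>i. (i, m - 1) \<in> Rel"
    using assms(2,3) unfolding correspondence_def by auto
  then obtain j i where j: "(n - 1, j) \<in> Rel" and i: "(i, m - 1) \<in> Rel"
    by blast
  have "i < n" "j < m"
    using corr i j unfolding correspondence_def by auto
  show ?thesis
  proof (cases "i < n - 1")
    case True
    then have "m - 1 \<le> j"
      using corr i j unfolding correspondence_def by blast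
    then have "j = m - 1"
      using \<open>j < m\<close> by arith
    then show ?thesis
      using j by simp
  next
    case False
    then have "i = n - 1"
      using \<open>i < n\<close> by arith
    then show ?thesis
      using i by simp
  qed
qed

lemma correspondence_predecessor:
  assumes corr: "correspondence n m Rel" and ij: "(i, j) \<in> Rel" and "0 < i + j"
  obtains i' j' where "(i', j') \<in> Rel" "i' \<le> i" "i \<le> Suc i'" "j' \<le> j" "j \<le> Suc j'"
    "i' + j' < i + j"
proof -
  have "i < n" "j < m"
    and mono: "\<And>i1 j1 i2 j2. (i1, j1) \<in> Rel \<Longrightarrow> (i2, j2) \<in> Rel \<Longrightarrow> i1 < i2 \<Longrightarrow> j1 \<le> j2"
    using corr ij unfolding correspondence_def by auto
  have pred_i: "\<exists>j'. (i - 1, j') \<in> Rel \<and> j' \<le> j" if "0 < i"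
  proof -
    obtain j' where "(i - 1, j') \<in> Rel"
      using corr \<open>i < n\<close> unfolding correspondence_def by (meson less_imp_diff_less)
    with mono[OF this ij] that show ?thesis
      by auto
  qed
  have pred_j: "\<exists>i'. (i', j - 1) \<in> Rel \<and> i' \<le> i" if "0 < j"
  proof -
    obtain i' where "(i', j - 1) \<in> Rel"
      using corr \<open>j < m\<close> unfolding correspondence_def by (meson less_imp_diff_less)
    with mono[OF ij this] that show ?thesis
      by (auto simp: not_less[symmetric])
  qed
  consider "i = 0" | "j = 0" | "0 < i" "0 < j"
    by blast
  then show thesis
  proof cases
    case 1
    with pred_j \<open>0 < i + j\<close> obtain i' where "(i', j - 1) \<in> Rel" "i' \<le> i"
      by auto
    with 1 \<open>0 < i + j\<close> show thesis
      using that[of i' "j - 1"] by auto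
  next
    case 2
    with pred_i \<open>0 < i + j\<close> obtain j' where "(i - 1, j') \<in> Rel" "j' \<le> j"
      by auto
    with 2 \<open>0 < i + j\<close> show thesis
      using that[of "i - 1" j'] by auto
  next
    case 3
    obtain j' where j': "(i - 1, j') \<in> Rel" "j' \<le> j"
      using pred_i 3 by blast
    obtain i' where i': "(i', j - 1) \<in> Rel" "i' \<le> i"
      using pred_j 3 by blast
    show thesis
    proof (cases "j - 1 \<le> j'")
      case True
      with j' 3 show thesis
        using that[of "i - 1" j'] by auto
    next
      case False
      then have "i - 1 \<le> i'"
        using mono[OF i'(1) j'(1)] by (meson not_le)
      with i' 3 show thesis
        using that[of i' "j - 1"] by auto
    qed
  qed
qed

(* Collapses the indices a, ..., a + b onto a: it aligns a sequence into which a block of length b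
   was inserted after position a with the original sequence. *)
definition collapse :: "nat \<Rightarrow> nat \<Rightarrow> nat \<Rightarrow> nat" where
  "collapse a b i = (if i \<le> a then i else if i \<le> a + b then a else i - b)"

lemma correspondence_collapse:
  "correspondence (Suc (a + b + c)) (Suc (a + c)) {(i, collapse a b i) | i. i < Suc (a + b + c)}"
proof (rule correspondence_graph)
  show "mono_on {..<Suc (a + b + c)} (collapse a b)"
    by (auto intro!: mono_onI simp: collapse_def)
  have "j \<in> collapse a b ` {..<Suc (a + b + c)}" if "j < Suc (a + c)" for j
  proof (cases "j \<le> a")
    case True
    with that show ?thesis
      by (auto intro!: image_eqI[of _ _ j] simp: collapse_def)
  next
    case False
    with that show ?thesis
      by (auto intro!: image_eqI[of _ _ "j + b"] simp: collapse_def)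
  qed
  then show "collapse a b ` {..<Suc (a + b + c)} = {..<Suc (a + c)}"
    by (auto simp: collapse_def)
qed

section \<open>Contractions of closed curves\<close>

definition null_homotopic :: "('a, 'b) monoid_scheme \<Rightarrow> 'a set \<Rightarrow> enat \<Rightarrow> 'a list \<Rightarrow> bool" where
  "null_homotopic G S r \<gamma>0 \<longleftrightarrow> (\<exists>(n::nat) (\<gamma>::nat \<Rightarrow> 'a list). \<gamma> 0 = \<gamma>0 \<and>
     (\<forall>j\<in>{1..n}. closed_S_curve_at G S \<one>\<^bsub>G\<^esub> (\<gamma> j) \<and> dU G S (\<gamma> (j - 1)) (\<gamma> j) \<le> r) \<and>
     \<gamma> n = [\<one>\<^bsub>G\<^esub>])"

lemma null_homotopic_trivial: "null_homotopic G S r [\<one>\<^bsub>G\<^esub>]"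
  unfolding null_homotopic_def by (rule exI[of _ 0]) auto

lemma null_homotopic_step:
  assumes "closed_S_curve_at G S \<one>\<^bsub>G\<^esub> \<gamma>'" "dU G S \<gamma> \<gamma>' \<le> r" "null_homotopic G S r \<gamma>'"
  shows "null_homotopic G S r \<gamma>"
proof -
  obtain n :: nat and \<gamma>s :: "nat \<Rightarrow> 'a list" where "\<gamma>s 0 = \<gamma>'"
    and steps: "\<forall>j\<in>{1..n}. closed_S_curve_at G S \<one>\<^bsub>G\<^esub> (\<gamma>s j) \<and> dU G S (\<gamma>s (j - 1)) (\<gamma>s j) \<le> r"
    and "\<gamma>s n = [\<one>\<^bsub>G\<^esub>]"
    using assms(3) unfolding null_homotopic_def by blast
  define \<delta> where "\<delta> j = (if j = 0 then \<gamma> else \<gamma>s (j - 1))" for j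
  have "closed_S_curve_at G S \<one>\<^bsub>G\<^esub> (\<delta> j) \<and> dU G S (\<delta> (j - 1)) (\<delta> j) \<le> r"
    if "j \<in> {1..Suc n}" for j
  proof (cases "j = 1")
    case False
    with that have j': "j - 1 \<in> {1..n}"
      by auto
    with False have "\<delta> (j - 1) = \<gamma>s (j - 1 - 1)" "\<delta> j = \<gamma>s (j - 1)"
      by (auto simp: \<delta>_def)
    with bspec[OF steps j'] show ?thesis
      by simp
  qed (use assms(1,2) \<open>\<gamma>s 0 = \<gamma>'\<close> in \<open>simp add: \<delta>_def\<close>)
  moreover have "\<delta> 0 = \<gamma>" "\<delta> (Suc n) = [\<one>\<^bsub>G\<^esub>]"
    using \<open>\<gamma>s n = [\<one>\<^bsub>G\<^esub>]\<close> by (simp_all add: \<delta>_def)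
  ultimately show ?thesis
    unfolding null_homotopic_def by blast
qed

lemma null_homotopic_induct [consumes 2, case_names trivial step]:
  assumes "closed_S_curve_at G S \<one>\<^bsub>G\<^esub> \<gamma>" "null_homotopic G S r \<gamma>"
    and "P [\<one>\<^bsub>G\<^esub>]"
    and "\<And>\<gamma> \<gamma>'. closed_S_curve_at G S \<one>\<^bsub>G\<^esub> \<gamma> \<Longrightarrow> closed_S_curve_at G S \<one>\<^bsub>G\<^esub> \<gamma>' \<Longrightarrow>
      dU G S \<gamma> \<gamma>' \<le> r \<Longrightarrow> P \<gamma>' \<Longrightarrow> P \<gamma>"
  shows "P \<gamma>"
proof -
  obtain n :: nat and \<gamma>s :: "nat \<Rightarrow> 'a list" where "\<gamma>s 0 = \<gamma>"
    and "\<forall>j\<in>{1..n}. closed_S_curve_at G S \<one>\<^bsub>G\<^esub> (\<gamma>s j) \<and> dU G S (\<gamma>s (j - 1)) (\<gamma>s j) \<le> r"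
    and "\<gamma>s n = [\<one>\<^bsub>G\<^esub>]"
    using assms(2) unfolding null_homotopic_def by blast
  with assms(1) show ?thesis
  proof (induction n arbitrary: \<gamma>s \<gamma>)
    case 0
    then show ?case using assms(3) by simp
  next
    case (Suc n)
    have "\<forall>j\<in>{1..n}. closed_S_curve_at G S \<one>\<^bsub>G\<^esub> (\<gamma>s (Suc j)) \<and>
        dU G S (\<gamma>s (Suc (j - 1))) (\<gamma>s (Suc j)) \<le> r"
    proof
      fix j assume "j \<in> {1..n}"
      then have "Suc j \<in> {1..Suc n}" "Suc (j - 1) = j"
        by auto
      then show "closed_S_curve_at G S \<one>\<^bsub>G\<^esub> (\<gamma>s (Suc j)) \<and>
          dU G S (\<gamma>s (Suc (j - 1))) (\<gamma>s (Suc j)) \<le> r"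
        using Suc.prems(3) by (metis diff_Suc_1)
    qed
    then have "P (\<gamma>s 1)"
      using Suc.prems by (intro Suc.IH[of "\<gamma>s 1" "\<lambda>j. \<gamma>s (Suc j)"]) auto
    moreover have "closed_S_curve_at G S \<one>\<^bsub>G\<^esub> (\<gamma>s 1)" "dU G S \<gamma> (\<gamma>s 1) \<le> r"
      using bspec[OF Suc.prems(3), of 1] Suc.prems(2) by simp_all
    ultimately show ?case
      using assms(4) Suc.prems(1) by blast
  qed
qed

locale unital_symmetric_subset = group +
  fixes S :: "'a set"
  assumes S_closed: "S \<subseteq> carrier G"
    and one_in_S: "\<one> \<in> S"
    and inv_in_S: "s \<in> S \<Longrightarrow> inv s \<in> S"
begin

lemma letter_val_in_S: "fst l \<in> S \<Longrightarrow> letter_val G l \<in> S"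
  unfolding letter_val_def by (auto intro: inv_in_S)

lemma curve_of_word_S_curve:
  assumes "is_word S u"
  shows "S_curve G S (curve_of_word G u)"
proof -
  have uc: "is_word (carrier G) u"
    using assms S_closed by (rule is_word_mono)
  have "set (curve_of_word G u) \<subseteq> carrier G"
    unfolding curve_of_word_def using word_eval_closed is_word_take[OF uc] word_eval_closed[OF uc]
    by auto
  moreover have "inv (curve_of_word G u ! k) \<otimes> curve_of_word G u ! Suc k \<in> S" if "k < length u" for k
  proof -
    have "fst (u ! k) \<in> S"
      using assms that unfolding is_word_def by auto
    moreover from this have "inv (curve_of_word G u ! k) \<otimes> curve_of_word G u ! Suc k = letter_val G (u ! k)"
      using that S_closed by (simp add: nth_curve_of_word word_eval_take_Suc[OF uc] m_assoc[symmetric]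
          word_eval_closed is_word_take[OF uc] letter_val_closed subsetD)
    ultimately show ?thesis
      by (simp add: letter_val_in_S)
  qed
  ultimately show ?thesis
    unfolding S_curve_def by (auto simp: gr0_conv_Suc)
qed

lemma closed_curve_of_word:
  "is_word S u \<Longrightarrow> word_eval G u = \<one> \<Longrightarrow> closed_S_curve_at G S \<one> (curve_of_word G u)"
  by (simp add: closed_S_curve_at_def curve_of_word_S_curve)

lemma adjacent_quotient_in_S:
  assumes "S_curve G S g" "i' \<le> i" "i \<le> Suc i'" "i < length g"
  shows "inv (g ! i') \<otimes> g ! i \<in> S"
proof (cases "i = i'")
  case True
  then have "g ! i \<in> carrier G"
    using assms unfolding S_curve_def by (auto dest: nth_mem)
  with True show ?thesis
    by (simp add: one_in_S)
next
  case False
  with assms have "i = Suc i'"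
    by simp
  with assms show ?thesis
    unfolding S_curve_def by (metis diff_Suc_1 zero_less_Suc)
qed

lemma set_pow_mono: "k \<le> m \<Longrightarrow> set_pow G S k \<subseteq> set_pow G S m"
proof (induction m)
  case (Suc m)
  have "set_pow G S m \<subseteq> set_pow G S (Suc m)"
    using set_pow_closed[OF S_closed] set_pow_SucI[OF _ one_in_S] by (metis r_one subsetD subsetI)
  with Suc show ?case
    by (auto simp: le_Suc_eq)
qed simp

lemma set_pow_left_mult: "s \<in> S \<Longrightarrow> y \<in> set_pow G S k \<Longrightarrow> s \<otimes> y \<in> set_pow G S (Suc k)"
proof (induction k arbitrary: y)
  case 0
  then show ?case
    using S_closed set_pow_SucI[of \<one> G S 0 s] by auto
next
  case (Suc k)
  from Suc.prems(2) obtain x t where xt: "y = x \<otimes> t" "x \<in> set_pow G S k" "t \<in> S"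
    by (auto elim: set_pow_SucE)
  moreover have "x \<in> carrier G" "t \<in> carrier G" "s \<in> carrier G"
    using xt Suc.prems S_closed set_pow_closed[OF S_closed] by auto
  then have "s \<otimes> (x \<otimes> t) = (s \<otimes> x) \<otimes> t"
    by (simp add: m_assoc)
  ultimately show ?case
    using Suc by (auto intro: set_pow_SucI)
qed

lemma set_pow_inv: "x \<in> set_pow G S k \<Longrightarrow> inv x \<in> set_pow G S k"
proof (induction k arbitrary: x)
  case (Suc k)
  from Suc.prems obtain y t where yt: "x = y \<otimes> t" "y \<in> set_pow G S k" "t \<in> S"
    by (auto elim: set_pow_SucE)
  moreover have "y \<in> carrier G" "t \<in> carrier G"
    using yt S_closed set_pow_closed[OF S_closed] by auto
  then have "inv (y \<otimes> t) = inv t \<otimes> inv y"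
    by (simp add: inv_mult_group)
  ultimately show ?case
    using Suc.IH by (auto intro: set_pow_left_mult inv_in_S)
qed simp

lemma dU_witness_mono: "dU_witness G S g h r \<Longrightarrow> r \<le> r' \<Longrightarrow> dU_witness G S g h r'"
  unfolding dU_witness_iff_correspondence using set_pow_mono by blast

lemma dU_le_enat_iff: "dU G S g h \<le> enat r \<longleftrightarrow> dU_witness G S g h r"
proof
  assume le: "dU G S g h \<le> enat r"
  let ?A = "{r. dU_witness G S g h r}"
  have "?A \<noteq> {}"
    using le by (auto simp: dU_def Inf_enat_def split: if_splits)
  then have "(LEAST r. r \<in> ?A) \<in> ?A"
    by (auto intro: LeastI)
  moreover have "enat (LEAST r. r \<in> ?A) \<le> dU G S g h"
    unfolding dU_def by (rule INF_greatest) (simp add: Least_le)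
  ultimately show "dU_witness G S g h r"
    using le dU_witness_mono by (metis enat_ord_simps(1) mem_Collect_eq order_trans)
next
  assume "dU_witness G S g h r"
  then show "dU G S g h \<le> enat r"
    unfolding dU_def by (rule INF_lower[OF CollectI])
qed

lemma dU_witness_sym:
  assumes "set g \<subseteq> carrier G" "set h \<subseteq> carrier G" "dU_witness G S g h r"
  shows "dU_witness G S h g r"
proof -
  obtain Rel where corr: "correspondence (length g) (length h) Rel"
    and val: "\<forall>(i, j)\<in>Rel. inv (g ! i) \<otimes> h ! j \<in> set_pow G S r"
    using assms(3) unfolding dU_witness_iff_correspondence by blast
  have "inv (h ! j) \<otimes> g ! i \<in> set_pow G S r" if "(i, j) \<in> Rel" for i j
  proof -
    have "i < length g" "j < length h"
      using that corr unfolding correspondence_def by auto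
    then have "g ! i \<in> carrier G" "h ! j \<in> carrier G"
      using assms(1,2) nth_mem by blast+
    then have "inv (h ! j) \<otimes> g ! i = inv (inv (g ! i) \<otimes> h ! j)"
      by (simp add: inv_mult_group)
    then show ?thesis
      using val that set_pow_inv by auto
  qed
  then show ?thesis
    unfolding dU_witness_iff_correspondence using correspondence_converse[OF corr] by blast
qed

end

section \<open>Presentations with short relators contract curves in unit steps\<close>

context unital_symmetric_subset
begin

lemma short_word_eval_in_S: "is_word S x \<Longrightarrow> length x \<le> 1 \<Longrightarrow> word_eval G x \<in> S"
  by (cases x) (auto simp: one_in_S letter_val_in_S letter_val_closed subsetD[OF S_closed])

lemma null_word_prefix_in_S:
  assumes x: "is_word S x" "length x \<le> 3" "word_eval G x = \<one>"
  shows "word_eval G (take k x) \<in> S"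
proof (cases "k \<le> 1")
  case True
  then show ?thesis
    using x by (intro short_word_eval_in_S) (auto intro: is_word_take)
next
  case False
  have xc: "is_word (carrier G) x"
    using x(1) S_closed by (rule is_word_mono)
  have "word_eval G (take k x) \<otimes> word_eval G (drop k x) = \<one>"
    using x(3) word_eval_append[of "take k x" "drop k x"] xc
    by (metis append_take_drop_id is_word_simps(3))
  then have "word_eval G (take k x) = inv (word_eval G (drop k x))"
    using xc by (metis append_take_drop_id inv_equality is_word_simps(3) word_eval_closed)
  moreover have "word_eval G (drop k x) \<in> S"
    using x False by (intro short_word_eval_in_S) (auto simp: is_word_def dest: in_set_dropD)
  ultimately show ?thesis
    by (simp add: inv_in_S)
qed

lemma pres_step_null_insertion:
  assumes R: "\<forall>r\<in>R. length r = 3 \<and> is_word S r \<and> word_eval G r = \<one>"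
    and step: "(y, z) \<in> pres_step S R"
  obtains u x v where "y = u @ x @ v" "z = u @ v" "is_word S u" "is_word S x" "is_word S v"
    "word_eval G x = \<one>" "length x \<le> 3"
proof -
  from step consider
    (cancel) u v s b where "y = u @ [(s, b), (s, \<not> b)] @ v" "z = u @ v" "is_word S u" "is_word S v" "s \<in> S"
  | (relator) u v r where "y = u @ r @ v" "z = u @ v" "is_word S u" "is_word S v" "r \<in> R"
    unfolding pres_step_def by blast
  then show thesis
  proof cases
    case cancel
    moreover have "word_eval G [(s, b), (s, \<not> b)] = \<one>"
      using cancel(5) S_closed by (cases b) (auto simp: letter_val_def subsetD)
    ultimately show thesis
      by (intro that[of u "[(s, b), (s, \<not> b)]" v]) auto
  next
    case relator
    then show thesis
      using that R by auto
  qed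
qed

lemma pres_step_word_eval:
  assumes "\<forall>r\<in>R. length r = 3 \<and> is_word S r \<and> word_eval G r = \<one>" "(y, z) \<in> pres_step S R"
  shows "is_word S y \<and> is_word S z \<and> word_eval G y = word_eval G z"
proof -
  obtain u x v where uxv: "y = u @ x @ v" "z = u @ v" "is_word S u" "is_word S x" "is_word S v"
    "word_eval G x = \<one>"
    using pres_step_null_insertion[OF assms] by metis
  then have "is_word (carrier G) u" "is_word (carrier G) x" "is_word (carrier G) v"
    using S_closed is_word_mono by blast+
  then show ?thesis
    using uxv by (simp add: word_eval_append word_eval_closed)
qed

lemma dU_witness_null_insertion:
  assumes words: "is_word (carrier G) u" "is_word (carrier G) x" "is_word (carrier G) v"
    and null: "word_eval G x = \<one>" and prefix: "\<And>k. word_eval G (take k x) \<in> S"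
  shows "dU_witness G S (curve_of_word G (u @ x @ v)) (curve_of_word G (u @ v)) 1"
proof -
  define a where "a = length u"
  define b where "b = length x"
  let ?\<phi> = "collapse a b"
  have corr: "correspondence (length (curve_of_word G (u @ x @ v))) (length (curve_of_word G (u @ v)))
      {(i, ?\<phi> i) | i. i < length (curve_of_word G (u @ x @ v))}"
    using correspondence_collapse[of a b "length v"] by (simp add: a_def b_def ac_simps)
  have "inv (curve_of_word G (u @ x @ v) ! i) \<otimes> curve_of_word G (u @ v) ! ?\<phi> i \<in> S"
    if "i \<le> length (u @ x @ v)" for i
  proof -
    let ?p = "word_eval G (take i u)" and ?q = "word_eval G (take (i - a) x)"
      and ?r = "word_eval G (take (i - a - b) v)"
    have pqr: "?p \<in> carrier G" "?q \<in> carrier G" "?r \<in> carrier G"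
      using words by (simp_all add: word_eval_closed is_word_take)
    have "take i (u @ x @ v) = take i u @ take (i - a) x @ take (i - a - b) v"
      by (simp add: a_def b_def)
    then have left: "curve_of_word G (u @ x @ v) ! i = ?p \<otimes> (?q \<otimes> ?r)"
      using that words by (simp add: nth_curve_of_word word_eval_append is_word_take)
    have "take (?\<phi> i) (u @ v) = take i u @ take (i - a - b) v" "?\<phi> i \<le> length (u @ v)"
      using that by (auto simp: collapse_def a_def b_def ac_simps)
    then have right: "curve_of_word G (u @ v) ! ?\<phi> i = ?p \<otimes> ?r"
      using words by (simp add: nth_curve_of_word word_eval_append is_word_take)
    \<comment> \<open>Before the end of the inserted block \<open>?r\<close> is trivial, after it \<open>?q\<close> is.\<close>
    have "?q \<otimes> ?r = ?r \<otimes> ?q"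
    proof (cases "i \<le> a + b")
      case False
      then have "take (i - a) x = x"
        by (simp add: b_def)
      then show ?thesis
        using null pqr by simp
    qed (use pqr in simp)
    then have "inv (curve_of_word G (u @ x @ v) ! i) \<otimes> curve_of_word G (u @ v) ! ?\<phi> i = inv ?q"
      using pqr by (simp add: left right inv_mult_group m_assoc[symmetric]) (simp add: m_assoc)
    then show ?thesis
      using prefix by (simp add: inv_in_S)
  qed
  then show ?thesis
    unfolding dU_witness_iff_correspondence set_pow_one[OF S_closed] using corr
    by (auto simp: less_Suc_eq_le)
qed

lemma pres_step_dU_witness:
  assumes R: "\<forall>r\<in>R. length r = 3 \<and> is_word S r \<and> word_eval G r = \<one>"
    and step: "(y, z) \<in> pres_step S R"
  shows "dU_witness G S (curve_of_word G y) (curve_of_word G z) 1"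
proof -
  obtain u x v where uxv: "y = u @ x @ v" "z = u @ v" "is_word S u" "is_word S x" "is_word S v"
    "word_eval G x = \<one>" "length x \<le> 3"
    using pres_step_null_insertion[OF assms] by metis
  have "is_word (carrier G) u" "is_word (carrier G) x" "is_word (carrier G) v"
    using uxv(3-5) S_closed by (auto elim: is_word_mono)
  with uxv show ?thesis
    using dU_witness_null_insertion null_word_prefix_in_S by simp
qed

lemma pres_step_dU_le_one:
  assumes R: "\<forall>r\<in>R. length r = 3 \<and> is_word S r \<and> word_eval G r = \<one>"
    and step: "(y, z) \<in> pres_step S R \<union> (pres_step S R)\<inverse>" and words: "is_word S y" "is_word S z"
  shows "dU G S (curve_of_word G y) (curve_of_word G z) \<le> 1"
proof -
  have "dU_witness G S (curve_of_word G y) (curve_of_word G z) 1"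
    using step
  proof
    assume "(y, z) \<in> (pres_step S R)\<inverse>"
    then have "dU_witness G S (curve_of_word G z) (curve_of_word G y) 1"
      using pres_step_dU_witness[OF R] by simp
    moreover have "set (curve_of_word G z) \<subseteq> carrier G" "set (curve_of_word G y) \<subseteq> carrier G"
      using curve_of_word_S_curve[OF words(2)] curve_of_word_S_curve[OF words(1)]
      by (simp_all add: S_curve_def)
    ultimately show ?thesis
      using dU_witness_sym by blast
  qed (rule pres_step_dU_witness[OF R])
  then show ?thesis
    by (simp add: dU_le_enat_iff one_enat_def)
qed

lemma pres_equiv_Nil_null_homotopic:
  assumes R: "\<forall>r\<in>R. length r = 3 \<and> is_word S r \<and> word_eval G r = \<one>"
    and "(w, []) \<in> pres_equiv S R" "is_word S w" "word_eval G w = \<one>"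
  shows "null_homotopic G S 1 (curve_of_word G w)"
  using assms(2-4) unfolding pres_equiv_def
proof (induction rule: converse_rtrancl_induct)
  case base
  then show ?case
    by (simp add: null_homotopic_trivial)
next
  case (step y z)
  then have z: "is_word S z" "word_eval G z = \<one>"
    using pres_step_word_eval[OF R] by auto
  have "dU G S (curve_of_word G y) (curve_of_word G z) \<le> 1"
    using pres_step_dU_le_one[OF R step(1) step.prems(1) z(1)] .
  then show ?case
    by (rule null_homotopic_step[OF closed_curve_of_word[OF z] _ step.IH[OF z]])
qed

lemma determining_set_null_homotopic:
  assumes "determining_set G S" and \<gamma>: "closed_S_curve_at G S \<one> \<gamma>"
  shows "null_homotopic G S 1 \<gamma>"
proof -
  obtain R where "\<forall>r\<in>R. length r = 3" and pres: "has_presentation G S R"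
    using assms(1) unfolding determining_set_def by blast
  then have R: "\<forall>r\<in>R. length r = 3 \<and> is_word S r \<and> word_eval G r = \<one>"
    unfolding has_presentation_def by blast
  have word: "is_word S (word_of_curve G \<gamma>)" "word_eval G (word_of_curve G \<gamma>) = \<one>"
    using \<gamma> word_of_curve_is_word word_eval_word_of_curve unfolding closed_S_curve_at_def by auto
  then have "(word_of_curve G \<gamma>, []) \<in> pres_equiv S R"
    using pres unfolding has_presentation_def pres_trivial_iff by blast
  with R word have "null_homotopic G S 1 (curve_of_word G (word_of_curve G \<gamma>))"
    by (intro pres_equiv_Nil_null_homotopic)
  with \<gamma> curve_of_word_of_curve[of S \<gamma>] show ?thesis
    unfolding closed_S_curve_at_def by simp
qed

end

section \<open>Triangle relators over a thickened generating set\<close>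

definition triangle_relators :: "('a, 'b) monoid_scheme \<Rightarrow> 'a set \<Rightarrow> 'a word set" where
  "triangle_relators G T = {r. length r = 3 \<and> is_word T r \<and> word_eval G r = \<one>\<^bsub>G\<^esub>}"

definition positive_word :: "'a set \<Rightarrow> 'a word \<Rightarrow> bool" where
  "positive_word S u \<longleftrightarrow> is_word S u \<and> (\<forall>l\<in>set u. \<not> snd l)"

lemma positive_word_simps [simp]:
  "positive_word S []"
  "positive_word S (u @ v) \<longleftrightarrow> positive_word S u \<and> positive_word S v"
  "positive_word S [l] \<longleftrightarrow> fst l \<in> S \<and> \<not> snd l"
  by (auto simp: positive_word_def)

context group
begin

lemma triangle_relator_equiv:
  assumes "T \<subseteq> carrier G" "x \<in> T" "y \<in> T" "x \<otimes> y \<in> T"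
  shows "([(x, False), (y, False)], [(x \<otimes> y, False)]) \<in> pres_equiv T (triangle_relators G T)"
proof -
  have "x \<in> carrier G" "y \<in> carrier G"
    using assms by auto
  then have "[(x, False), (y, False), (x \<otimes> y, True)] \<in> triangle_relators G T"
    using assms by (simp add: triangle_relators_def letter_val_def m_assoc[symmetric])
  then have "([] @ [(x, False), (y, False), (x \<otimes> y, True)] @ [(x \<otimes> y, False)], [] @ [(x \<otimes> y, False)])
      \<in> pres_equiv T (triangle_relators G T)"
    using assms by (intro pres_equiv_relator) auto
  moreover have "([(x, False), (y, False)] @ [(x \<otimes> y, True), (x \<otimes> y, \<not> True)] @ [],
      [(x, False), (y, False)] @ []) \<in> pres_equiv T (triangle_relators G T)"
    using assms by (intro pres_equiv_cancel) auto
  ultimately show ?thesis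
    using pres_equiv_sym pres_equiv_trans by fastforce
qed

lemma one_letter_equiv_Nil:
  assumes "T \<subseteq> carrier G" "\<one> \<in> T"
  shows "([(\<one>, False)], []) \<in> pres_equiv T (triangle_relators G T)"
proof -
  have "[(\<one>, False), (\<one>, False), (\<one>, True)] \<in> triangle_relators G T"
    using assms by (simp add: triangle_relators_def letter_val_def)
  then have "([] @ [(\<one>, False), (\<one>, False), (\<one>, True)] @ [], [] @ [])
      \<in> pres_equiv T (triangle_relators G T)"
    using assms by (intro pres_equiv_relator) auto
  moreover have "([(\<one>, False)] @ [(\<one>, False), (\<one>, \<not> False)] @ [], [(\<one>, False)] @ [])
      \<in> pres_equiv T (triangle_relators G T)"
    using assms by (intro pres_equiv_cancel) auto
  ultimately show ?thesis
    using pres_equiv_sym pres_equiv_trans by fastforce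
qed

lemma inverse_letter_equiv:
  assumes T: "T \<subseteq> carrier G" "\<one> \<in> T" and t: "t \<in> T" "inv t \<in> T"
  shows "([(t, True)], [(inv t, False)]) \<in> pres_equiv T (triangle_relators G T)"
proof -
  let ?E = "pres_equiv T (triangle_relators G T)"
  have "([(t, True)] @ [(\<one>, False)], [(t, True)] @ []) \<in> ?E"
    using pres_equiv_context[OF one_letter_equiv_Nil[OF T], of "[(t, True)]" "[]"] t by simp
  moreover have "([(t, True)] @ [(t, False), (inv t, False)], [(t, True)] @ [(\<one>, False)]) \<in> ?E"
    using pres_equiv_context[OF triangle_relator_equiv[OF T(1) t(1,2)], of "[(t, True)]" "[]"] t T
    by (simp add: subsetD)
  moreover have "([] @ [(t, True), (t, \<not> True)] @ [(inv t, False)], [] @ [(inv t, False)]) \<in> ?E"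
    using t by (intro pres_equiv_cancel) auto
  ultimately show ?thesis
    using pres_equiv_sym pres_equiv_trans by (metis append.left_neutral append_Cons append_Nil2)
qed

lemma square_equiv:
  assumes "T \<subseteq> carrier G" "a \<in> T" "c \<in> T" "c' \<in> T" "b \<in> T" "a \<otimes> c = c' \<otimes> b" "a \<otimes> c \<in> T"
  shows "([(a, False), (c, False)], [(c', False), (b, False)]) \<in> pres_equiv T (triangle_relators G T)"
proof -
  have "([(a, False), (c, False)], [(a \<otimes> c, False)]) \<in> pres_equiv T (triangle_relators G T)"
    using assms by (intro triangle_relator_equiv)
  moreover have "([(c', False), (b, False)], [(a \<otimes> c, False)]) \<in> pres_equiv T (triangle_relators G T)"
    using assms triangle_relator_equiv[of T c' b] by simp
  ultimately show ?thesis
    using pres_equiv_sym pres_equiv_trans by blast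
qed

end

locale thickening = unital_symmetric_subset +
  fixes N :: nat
begin

abbreviation T :: "'a set" where
  "T \<equiv> set_pow G S (Suc N)"

abbreviation T_equiv :: "('a word \<times> 'a word) set" where
  "T_equiv \<equiv> pres_equiv T (triangle_relators G T)"

lemma T_closed: "T \<subseteq> carrier G"
  using S_closed by (rule set_pow_closed)

lemma set_pow_subset_T: "k \<le> Suc N \<Longrightarrow> set_pow G S k \<subseteq> T"
  by (rule set_pow_mono)

lemma S_subset_T: "S \<subseteq> T"
proof -
  have "set_pow G S 1 \<subseteq> T"
    by (rule set_pow_subset_T) simp
  then show ?thesis
    by (simp only: set_pow_one[OF S_closed])
qed

lemma one_in_T: "\<one> \<in> T"
  using S_subset_T one_in_S by blast

lemma positive_word_is_word_T: "positive_word S u \<Longrightarrow> is_word T u"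
  unfolding positive_word_def using S_subset_T by (blast intro: is_word_mono)

lemma positive_word_is_word_carrier: "positive_word S u \<Longrightarrow> is_word (carrier G) u"
  unfolding positive_word_def using S_closed by (blast intro: is_word_mono)

lemma set_pow_equiv_positive_word:
  "k \<le> Suc N \<Longrightarrow> t \<in> set_pow G S k \<Longrightarrow>
    \<exists>u. positive_word S u \<and> word_eval G u = t \<and> ([(t, False)], u) \<in> T_equiv"
proof (induction k arbitrary: t)
  case 0
  then show ?case
    using one_letter_equiv_Nil[OF T_closed one_in_T] by (intro exI[of _ "[]"]) auto
next
  case (Suc k)
  from Suc.prems(2) obtain x s where xs: "t = x \<otimes> s" "x \<in> set_pow G S k" "s \<in> S"
    by (auto elim: set_pow_SucE)
  obtain u where u: "positive_word S u" "word_eval G u = x" "([(x, False)], u) \<in> T_equiv"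
    using Suc xs by auto
  have "x \<in> T" "s \<in> T" "t \<in> T"
    using Suc.prems xs set_pow_subset_T[of k] set_pow_subset_T[of "Suc k"] S_subset_T by auto
  then have "([(t, False)], [(x, False)] @ [(s, False)]) \<in> T_equiv"
    using triangle_relator_equiv[OF T_closed] pres_equiv_sym xs(1) by fastforce
  moreover have "([(x, False)] @ [(s, False)], u @ [(s, False)]) \<in> T_equiv"
    using pres_equiv_context[OF u(3), of "[]" "[(s, False)]"] \<open>s \<in> T\<close> by simp
  ultimately have "([(t, False)], u @ [(s, False)]) \<in> T_equiv"
    by (rule pres_equiv_trans)
  moreover have "word_eval G (u @ [(s, False)]) = t"
    using u xs S_closed positive_word_is_word_carrier
    by (auto simp: word_eval_append letter_val_def subsetD)
  ultimately show ?case
    using u xs by (intro exI[of _ "u @ [(s, False)]"]) auto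
qed


lemma letter_equiv_positive_word:
  assumes "fst l \<in> T"
  shows "\<exists>u. positive_word S u \<and> word_eval G u = letter_val G l \<and> ([l], u) \<in> T_equiv"
proof (cases l)
  case (Pair t b)
  show ?thesis
  proof (cases b)
    case False
    then show ?thesis
      using set_pow_equiv_positive_word[of "Suc N" t] assms Pair by (simp add: letter_val_def)
  next
    case True
    have "inv t \<in> T"
      using assms Pair set_pow_inv by simp
    then obtain u where u: "positive_word S u" "word_eval G u = inv t" "([(inv t, False)], u) \<in> T_equiv"
      using set_pow_equiv_positive_word[of "Suc N" "inv t"] by auto
    moreover have "([(t, True)], [(inv t, False)]) \<in> T_equiv"
      using inverse_letter_equiv[OF T_closed one_in_T] assms Pair \<open>inv t \<in> T\<close> by simp
    ultimately show ?thesis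
      using Pair True pres_equiv_trans by (intro exI[of _ u]) (auto simp: letter_val_def)
  qed
qed

lemma word_equiv_positive_word:
  "is_word T w \<Longrightarrow> \<exists>u. positive_word S u \<and> word_eval G u = word_eval G w \<and> (w, u) \<in> T_equiv"
proof (induction w)
  case Nil
  then show ?case
    using pres_equiv_refl by (intro exI[of _ "[]"]) auto
next
  case (Cons l w)
  obtain u1 where u1: "positive_word S u1" "word_eval G u1 = letter_val G l" "([l], u1) \<in> T_equiv"
    using Cons.prems letter_equiv_positive_word[of l] by auto
  obtain u2 where u2: "positive_word S u2" "word_eval G u2 = word_eval G w" "(w, u2) \<in> T_equiv"
    using Cons by auto
  have "([l] @ w, u1 @ u2) \<in> T_equiv"
    using pres_equiv_append[OF u1(3) u2(3)] Cons.prems positive_word_is_word_T[OF u1(1)] by simp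
  moreover have "word_eval G (u1 @ u2) = word_eval G (l # w)"
    using u1 u2 by (simp add: word_eval_append positive_word_is_word_carrier)
  ultimately show ?case
    using u1 u2 by (intro exI[of _ "u1 @ u2"]) auto
qed

lemma word_of_curve_is_word_T: "S_curve G S g \<Longrightarrow> is_word T (word_of_curve G g)"
  using S_subset_T by (blast intro: word_of_curve_is_word S_curve_mono)

lemma take_word_of_curve_equiv:
  assumes "S_curve G S g" "i' \<le> i" "i \<le> Suc i'" "i < length g"
  shows "(take i (word_of_curve G g), take i' (word_of_curve G g) @ [(inv (g ! i') \<otimes> g ! i, False)])
    \<in> T_equiv"
proof (cases "i = i'")
  case True
  have "g ! i \<in> carrier G"
    using assms unfolding S_curve_def by (auto dest: nth_mem)
  moreover have "is_word T (take i (word_of_curve G g))"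
    using word_of_curve_is_word_T[OF assms(1)] by (rule is_word_take)
  ultimately show ?thesis
    using True pres_equiv_context[OF one_letter_equiv_Nil[OF T_closed one_in_T],
        of "take i (word_of_curve G g)" "[]"]
    by (simp add: pres_equiv_sym)
next
  case False
  with assms have "i = Suc i'"
    by simp
  with assms(4) show ?thesis
    by (simp add: take_Suc_word_of_curve pres_equiv_refl)
qed

lemma ladder_rung_equiv:
  assumes g: "S_curve G S g" and h: "S_curve G S h"
    and i: "i' \<le> i" "i \<le> Suc i'" "i < length g" and j: "j' \<le> j" "j \<le> Suc j'" "j < length h"
    and near: "inv (g ! i) \<otimes> h ! j \<in> set_pow G S N" "inv (g ! i') \<otimes> h ! j' \<in> set_pow G S N"
  shows "(take i (word_of_curve G g) @ [(inv (g ! i) \<otimes> h ! j, False)],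
    take i' (word_of_curve G g) @ [(inv (g ! i') \<otimes> h ! j', False), (inv (h ! j') \<otimes> h ! j, False)])
    \<in> T_equiv"
proof -
  define a where "a = inv (g ! i') \<otimes> g ! i"
  define b where "b = inv (h ! j') \<otimes> h ! j"
  define c where "c = inv (g ! i) \<otimes> h ! j"
  define c' where "c' = inv (g ! i') \<otimes> h ! j'"
  have "a \<in> S" "b \<in> S"
    unfolding a_def b_def using adjacent_quotient_in_S g h i j by auto
  have g_closed: "g ! k \<in> carrier G" if "k < length g" for k
    using g that unfolding S_curve_def by (auto dest: nth_mem)
  have h_closed: "h ! k \<in> carrier G" if "k < length h" for k
    using h that unfolding S_curve_def by (auto dest: nth_mem)
  have "g ! i \<in> carrier G" "g ! i' \<in> carrier G" "h ! j \<in> carrier G" "h ! j' \<in> carrier G"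
    using i j by (auto intro: g_closed h_closed)
  then have "a \<otimes> c = c' \<otimes> b"
    unfolding a_def b_def c_def c'_def by (simp add: inv_mult_telescope)
  moreover have "c' \<otimes> b \<in> T"
    using near(2) \<open>b \<in> S\<close> unfolding c'_def by (rule set_pow_SucI)
  moreover have "a \<in> T" "b \<in> T" "c \<in> T" "c' \<in> T"
    using \<open>a \<in> S\<close> \<open>b \<in> S\<close> near S_subset_T set_pow_subset_T[of N] unfolding c_def c'_def by auto
  ultimately have rung: "([(a, False), (c, False)], [(c', False), (b, False)]) \<in> T_equiv"
    by (intro square_equiv[OF T_closed]) simp_all
  have prefix: "is_word T (take i' (word_of_curve G g))"
    using word_of_curve_is_word_T[OF g] by (rule is_word_take)
  have "(take i (word_of_curve G g) @ [(c, False)], take i' (word_of_curve G g) @ [(a, False), (c, False)])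
      \<in> T_equiv"
    using pres_equiv_append[OF take_word_of_curve_equiv[OF g i] pres_equiv_refl[of "[(c, False)]"]]
      prefix \<open>a \<in> T\<close> \<open>c \<in> T\<close> by (simp add: a_def)
  moreover have "(take i' (word_of_curve G g) @ [(a, False), (c, False)],
      take i' (word_of_curve G g) @ [(c', False), (b, False)]) \<in> T_equiv"
    using pres_equiv_context[OF rung prefix, of "[]"] by simp
  ultimately show ?thesis
    unfolding b_def c_def c'_def by (rule pres_equiv_trans)
qed

lemma correspondence_prefix_equiv:
  assumes g: "S_curve G S g" "hd g = \<one>" and h: "S_curve G S h" "hd h = \<one>"
    and corr: "correspondence (length g) (length h) Rel"
    and near: "\<forall>(i, j)\<in>Rel. inv (g ! i) \<otimes> h ! j \<in> set_pow G S N"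
    and "(i, j) \<in> Rel"
  shows "(take i (word_of_curve G g) @ [(inv (g ! i) \<otimes> h ! j, False)], take j (word_of_curve G h))
    \<in> T_equiv"
  using \<open>(i, j) \<in> Rel\<close>
proof (induction "i + j" arbitrary: i j rule: less_induct)
  case less
  have ij: "i < length g" "j < length h"
    using less.prems corr unfolding correspondence_def by auto
  show ?case
  proof (cases "i + j = 0")
    case True
    have "g \<noteq> []" "h \<noteq> []"
      using g h by (simp_all add: S_curve_def)
    then have "inv (g ! 0) \<otimes> h ! 0 = \<one>"
      using g h by (simp add: hd_conv_nth)
    with True show ?thesis
      using one_letter_equiv_Nil[OF T_closed one_in_T] by simp
  next
    case False
    then obtain i' j' where ij': "(i', j') \<in> Rel" "i' \<le> i" "i \<le> Suc i'" "j' \<le> j" "j \<le> Suc j'"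
      "i' + j' < i + j"
      using correspondence_predecessor[OF corr less.prems] by blast
    let ?b = "inv (h ! j') \<otimes> h ! j"
    have "?b \<in> T"
      using adjacent_quotient_in_S[OF h(1) ij'(4,5) ij(2)] S_subset_T by auto
    have "(take i (word_of_curve G g) @ [(inv (g ! i) \<otimes> h ! j, False)],
        (take i' (word_of_curve G g) @ [(inv (g ! i') \<otimes> h ! j', False)]) @ [(?b, False)]) \<in> T_equiv"
      using ladder_rung_equiv[OF g(1) h(1) ij'(2,3) ij(1) ij'(4,5) ij(2)] near less.prems ij'(1) by auto
    moreover have "((take i' (word_of_curve G g) @ [(inv (g ! i') \<otimes> h ! j', False)]) @ [(?b, False)],
        take j' (word_of_curve G h) @ [(?b, False)]) \<in> T_equiv"
      using pres_equiv_append[OF less.hyps[OF ij'(6,1)] pres_equiv_refl] \<open>?b \<in> T\<close>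
        is_word_take[OF word_of_curve_is_word_T[OF h(1)]] by simp
    moreover have "(take j' (word_of_curve G h) @ [(?b, False)], take j (word_of_curve G h)) \<in> T_equiv"
      using take_word_of_curve_equiv[OF h(1) ij'(4,5) ij(2)] by (rule pres_equiv_sym)
    ultimately show ?thesis
      by (meson pres_equiv_trans)
  qed
qed

lemma dU_witness_word_equiv:
  assumes g: "closed_S_curve_at G S \<one> g" and h: "closed_S_curve_at G S \<one> h"
    and "dU_witness G S g h N"
  shows "(word_of_curve G g, word_of_curve G h) \<in> T_equiv"
proof -
  obtain Rel where corr: "correspondence (length g) (length h) Rel"
    and near: "\<forall>(i, j)\<in>Rel. inv (g ! i) \<otimes> h ! j \<in> set_pow G S N"
    using assms(3) unfolding dU_witness_iff_correspondence by blast
  have "g \<noteq> []" "h \<noteq> []"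
    using g h by (simp_all add: closed_S_curve_at_def S_curve_def)
  then have "(length g - 1, length h - 1) \<in> Rel" "inv (g ! (length g - 1)) \<otimes> h ! (length h - 1) = \<one>"
    using correspondence_last[OF corr] g h by (simp_all add: closed_S_curve_at_def last_conv_nth)
  then have "(word_of_curve G g @ [(\<one>, False)], word_of_curve G h) \<in> T_equiv"
    using correspondence_prefix_equiv[OF _ _ _ _ corr near] g h
    by (fastforce simp: closed_S_curve_at_def)
  moreover have "(word_of_curve G g @ [(\<one>, False)], word_of_curve G g) \<in> T_equiv"
    using pres_equiv_context[OF one_letter_equiv_Nil[OF T_closed one_in_T], of "word_of_curve G g" "[]"]
      word_of_curve_is_word_T g by (simp add: closed_S_curve_at_def)
  ultimately show ?thesis
    using pres_equiv_sym pres_equiv_trans by blast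
qed

lemma null_homotopic_word_equiv_Nil:
  assumes "closed_S_curve_at G S \<one> \<gamma>" "null_homotopic G S (enat N) \<gamma>"
  shows "(word_of_curve G \<gamma>, []) \<in> T_equiv"
  using assms
proof (induction rule: null_homotopic_induct)
  case trivial
  then show ?case
    by (simp add: word_of_curve_def pres_equiv_refl)
next
  case (step \<gamma> \<gamma>')
  then have "(word_of_curve G \<gamma>, word_of_curve G \<gamma>') \<in> T_equiv"
    by (simp add: dU_le_enat_iff dU_witness_word_equiv)
  with step(4) show ?case
    by (rule pres_equiv_trans[rotated])
qed

lemma determining_set_T:
  assumes gen: "generate G S = carrier G"
    and contractible: "\<And>\<gamma>. closed_S_curve_at G S \<one> \<gamma> \<Longrightarrow> null_homotopic G S (enat N) \<gamma>"
  shows "determining_set G T"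
proof -
  have gen_T: "generate G T = carrier G"
    using mono_generate[OF S_subset_T] generate_incl[OF T_closed] gen by blast
  have trivial: "(w, []) \<in> T_equiv" if w: "is_word T w" "word_eval G w = \<one>" for w
  proof -
    obtain u where u: "positive_word S u" "word_eval G u = \<one>" "(w, u) \<in> T_equiv"
      using word_equiv_positive_word[OF w(1)] w(2) by auto
    then have "closed_S_curve_at G S \<one> (curve_of_word G u)"
      by (simp add: closed_curve_of_word positive_word_def)
    then have "(word_of_curve G (curve_of_word G u), []) \<in> T_equiv"
      using contractible null_homotopic_word_equiv_Nil by blast
    moreover have "word_of_curve G (curve_of_word G u) = u"
      using u(1) positive_word_is_word_carrier by (simp add: word_of_curve_of_word positive_word_def)
    ultimately show ?thesis
      using u(3) pres_equiv_trans by metis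
  qed
  have "has_presentation G T (triangle_relators G T)"
    unfolding has_presentation_def pres_trivial_iff
    using T_closed gen_T trivial by (auto simp: triangle_relators_def)
  moreover have "\<forall>r\<in>triangle_relators G T. length r = 3"
    by (simp add: triangle_relators_def)
  ultimately show ?thesis
    unfolding determining_set_def using T_closed one_in_T gen_T by blast
qed

end

theorem mainTheorem15:
  fixes G :: "('a, 'b) monoid_scheme" and S :: "'a set"
  assumes "group G"
    and "S \<subseteq> carrier G"
    and "\<forall>s\<in>S. inv\<^bsub>G\<^esub> s \<in> S"
    and "\<one>\<^bsub>G\<^esub> \<in> S"
    and "generate G S = carrier G"
  shows "(determining_set G S \<longrightarrow>
            (\<forall>\<gamma>0. closed_S_curve_at G S \<one>\<^bsub>G\<^esub> \<gamma>0 \<longrightarrow>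
               (\<exists>(n::nat) (\<gamma>::nat \<Rightarrow> 'a list). \<gamma> 0 = \<gamma>0 \<and>
                  (\<forall>j\<in>{1..n}. closed_S_curve_at G S \<one>\<^bsub>G\<^esub> (\<gamma> j) \<and>
                               dU G S (\<gamma> (j - 1)) (\<gamma> j) \<le> 1) \<and>
                  \<gamma> n = [\<one>\<^bsub>G\<^esub>])))
       \<and> (\<forall>N::nat.
            (\<forall>\<gamma>0. closed_S_curve_at G S \<one>\<^bsub>G\<^esub> \<gamma>0 \<longrightarrow>
               (\<exists>(n::nat) (\<gamma>::nat \<Rightarrow> 'a list). \<gamma> 0 = \<gamma>0 \<and>
                  (\<forall>j\<in>{1..n}. closed_S_curve_at G S \<one>\<^bsub>G\<^esub> (\<gamma> j) \<and>
                               dU G S (\<gamma> (j - 1)) (\<gamma> j) \<le> enat N) \<and>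
                  \<gamma> n = [\<one>\<^bsub>G\<^esub>]))
            \<longrightarrow> determining_set G (set_pow G S (N + 1)))"
  unfolding null_homotopic_def[symmetric]
proof (intro conjI allI impI)
  interpret unital_symmetric_subset G S
    using assms by (intro unital_symmetric_subset.intro unital_symmetric_subset_axioms.intro) auto
  show "null_homotopic G S 1 \<gamma>"
    if "determining_set G S" "closed_S_curve_at G S \<one>\<^bsub>G\<^esub> \<gamma>" for \<gamma>
    using that by (rule determining_set_null_homotopic)
  fix N :: nat
  interpret thickening G S N ..
  assume "\<forall>\<gamma>. closed_S_curve_at G S \<one>\<^bsub>G\<^esub> \<gamma> \<longrightarrow> null_homotopic G S (enat N) \<gamma>"
  then show "determining_set G (set_pow G S (N + 1))"
    using determining_set_T[OF assms(5)] by simp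
qed

end
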